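(* Let $X$ and $Y$ be uncertain variables on a common set $\Omega$ with finite ranges. Then $$I_\star(X;Y)\;=\;\sup_{g}\ \mathcal{L}(g\circ X\rightarrow Y)\;\leq\; \mathcal{L}_\star(X\rightarrow Y),$$ where the supremum ranges over all finite sets $\mathcal{U}$ and all functions $g:[\![X]\!]\to\mathcal{U}$ such that $|[\![g\circ X\mid Y(\omega)=y]\!]|=|\{g(x):x\in[\![X\mid Y(\omega)=y]\!]\}|=1$ for every $y\in[\![Y]\!]$.
   Context: Let $\Omega$ be a set. An uncertain variable (uv) is a map $X:\Omega\to\mathbb{X}$ into some set; all uvs considered have finite ranges. The range of $X$ is $[\![X]\!]:=\{X(\omega):\omega\in\Omega\}$; the conditional range is $[\![X\mid Y(\omega)=y]\!]:=\{X(\omega):\omega\in\Omega,\ Y(\omega)=y\}$. Two points $x,x'\in[\![X]\!]$ are overlap connected if there is a finite sequence $y_1,\dots,y_n\in[\![Y]\!]$ with $x\in[\![X\mid Y(\omega)=y_1]\!]$, $x'\in[\![X\mid Y(\omega)=y_n]\!]$ and $[\![X\mid Y(\omega)=y_i]\!]\cap[\![X\mid Y(\omega)=y_{i+1}]\!]\neq\emptyset$ for $i=1,\dots,n-1$. The overlap partition $[\![X\mid Y]\!]_\star$ is the (unique) partition of $[\![X]\!]$ into the equivalence classes of this relation (each class is overlap connected and points in different classes are not overlap connected). The maximin information is $I_\star(X;Y):=\log_2|[\![X\mid Y]\!]_\star|$. The non-stochastic brute-force guessing leakage from a uv $U$ to a uv $Y$ is $$\mathcal{L}(U\rightarrow Y):=\log_2\left(\frac{|[\![U]\!]|}{\min_{y\in[\![Y]\!]}|[\![U\mid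 Y(\omega)=y]\!]|}\right).$$ The maximal non-stochastic brute-force leakage from $X$ to $Y$ is $$\mathcal{L}_\star(X\rightarrow Y):=\sup_{g}\ \mathcal{L}(g\circ X\rightarrow Y),$$ where the supremum ranges over all finite sets $\mathcal{U}$ and all functions $g:[\![X]\!]\to\mathcal{U}$. *)

theory Defs
  imports Complex_Main
begin

text \<open>Uncertain variables are maps out of a sample type 'w (playing the role of \<Omega>).
  The range of X is range X.\<close>

definition cond_range :: "('w \<Rightarrow> 'x) \<Rightarrow> ('w \<Rightarrow> 'y) \<Rightarrow> 'y \<Rightarrow> 'x set" where
  "cond_range X Y y = {X w | w. Y w = y}"

definition overlap_connected ::
    "('w \<Rightarrow> 'x) \<Rightarrow> ('w \<Rightarrow> 'y) \<Rightarrow> 'x \<Rightarrow> 'x \<Rightarrow> bool" where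
  "overlap_connected X Y x x' \<longleftrightarrow>
     (\<exists>ys. ys \<noteq> [] \<and> set ys \<subseteq> range Y \<and>
        x \<in> cond_range X Y (hd ys) \<and> x' \<in> cond_range X Y (last ys) \<and>
        (\<forall>i. i + 1 < length ys \<longrightarrow>
           cond_range X Y (ys ! i) \<inter> cond_range X Y (ys ! (i + 1)) \<noteq> {}))"

definition overlap_partition :: "('w \<Rightarrow> 'x) \<Rightarrow> ('w \<Rightarrow> 'y) \<Rightarrow> 'x set set" where
  "overlap_partition X Y =
     {{x' \<in> range X. overlap_connected X Y x x'} | x. x \<in> range X}"

definition maximin_info :: "('w \<Rightarrow> 'x) \<Rightarrow> ('w \<Rightarrow> 'y) \<Rightarrow> real" where
  "maximin_info X Y = log 2 (real (card (overlap_partition X Y)))"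

definition bf_leakage :: "('w \<Rightarrow> 'u) \<Rightarrow> ('w \<Rightarrow> 'y) \<Rightarrow> real" where
  "bf_leakage U Y =
     log 2 (real (card (range U)) /
            real (Min ((\<lambda>y. card (cond_range U Y y)) ` range Y)))"

text \<open>Any finite set embeds injectively into nat, and the leakage is invariant under injective
  relabelling, so the codomain is taken to be nat (image on range X is automatically finite).\<close>
definition max_bf_leakage :: "('w \<Rightarrow> 'x) \<Rightarrow> ('w \<Rightarrow> 'y) \<Rightarrow> real" where
  "max_bf_leakage X Y = Sup {bf_leakage (g \<circ> X) Y | g :: 'x \<Rightarrow> nat. True}"

end

theory Submission
  imports Defs
begin

text \<open>The functions g for which every conditional range of g \<circ> X is a singleton are exactly
  those constant on every conditional range of X. Following a chain of overlapping conditional ranges, such a g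
  is constant on every overlap class, so it takes at most as many values as there are classes;
  an injective labelling of the classes attains this. For such g the minimal conditional range
  has one element, so the leakage is the logarithm of the number of values of g, and the
  supremum is log 2 of the number of classes. The inequality holds because the constrained
  supremum ranges over a subset of a set bounded by log 2 (card (range X)).\<close>

lemma cond_range_comp: "cond_range (g \<circ> X) Y y = g ` cond_range X Y y"
  unfolding cond_range_def by auto

lemma cond_range_nonempty: "y \<in> range Y \<Longrightarrow> cond_range X Y y \<noteq> {}"
  unfolding cond_range_def by auto

lemma cond_range_subset_range: "cond_range X Y y \<subseteq> range X"
  unfolding cond_range_def by auto

lemma card_image_eq_1_iff:
  assumes "A \<noteq> {}"
  shows "card (g ` A) = 1 \<longleftrightarrow> (\<forall>a\<in>A. \<forall>b\<in>A. g a = g b)"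
proof
  assume "card (g ` A) = 1"
  then obtain c where "g ` A = {c}" by (auto simp: card_1_singleton_iff)
  then show "\<forall>a\<in>A. \<forall>b\<in>A. g a = g b" by (metis image_eqI singletonD)
next
  assume const: "\<forall>a\<in>A. \<forall>b\<in>A. g a = g b"
  obtain a where "a \<in> A" using assms by blast
  with const have "g ` A = {g a}" by blast
  then show "card (g ` A) = 1" by simp
qed

lemma card_cond_range_comp_eq_1_iff:
  assumes "y \<in> range Y"
  shows "card (cond_range (g \<circ> X) Y y) = 1 \<longleftrightarrow>
         (\<forall>a\<in>cond_range X Y y. \<forall>b\<in>cond_range X Y y. g a = g b)"
  unfolding cond_range_comp using card_image_eq_1_iff[OF cond_range_nonempty[OF assms]] .

lemma overlap_connected_refl:
  assumes "x \<in> range X" shows "overlap_connected X Y x x"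
proof -
  obtain w where "x = X w" using assms by blast
  then show ?thesis unfolding overlap_connected_def cond_range_def
    by (intro exI[of _ "[Y w]"]) auto
qed

lemma overlap_connected_Cons:
  assumes "overlap_connected X Y x1 x'" "y \<in> range Y"
    and "x1 \<in> cond_range X Y y" "x2 \<in> cond_range X Y y"
  shows "overlap_connected X Y x2 x'"
proof -
  obtain ys where ys: "ys \<noteq> []" "set ys \<subseteq> range Y" "x1 \<in> cond_range X Y (hd ys)"
    "x' \<in> cond_range X Y (last ys)"
    "\<forall>i. i + 1 < length ys \<longrightarrow> cond_range X Y (ys ! i) \<inter> cond_range X Y (ys ! (i + 1)) \<noteq> {}"
    using assms(1) unfolding overlap_connected_def by blast
  show ?thesis unfolding overlap_connected_def
  proof (intro exI[of _ "y # ys"] conjI allI impI)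
    fix i assume i: "i + 1 < length (y # ys)"
    show "cond_range X Y ((y # ys) ! i) \<inter> cond_range X Y ((y # ys) ! (i + 1)) \<noteq> {}"
    proof (cases i)
      case 0
      then show ?thesis using assms(3) ys(1,3) by (auto simp: hd_conv_nth)
    next
      case (Suc j)
      then show ?thesis using ys(5) i by auto
    qed
  qed (use ys assms in auto)
qed

lemma overlap_connected_imp_eq:
  assumes oc: "overlap_connected X Y x x'"
    and const: "\<forall>y\<in>range Y. \<forall>a\<in>cond_range X Y y. \<forall>b\<in>cond_range X Y y. g a = g b"
  shows "g x' = g x"
proof -
  obtain ys where ys: "ys \<noteq> []" "set ys \<subseteq> range Y" "x \<in> cond_range X Y (hd ys)"
    "x' \<in> cond_range X Y (last ys)"
    "\<forall>i. i + 1 < length ys \<longrightarrow> cond_range X Y (ys ! i) \<inter> cond_range X Y (ys ! (i + 1)) \<noteq> {}"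
    using oc unfolding overlap_connected_def by blast
  have in_range: "ys ! i \<in> range Y" if "i < length ys" for i
    using ys(2) nth_mem[OF that] by blast
  have along_chain: "\<forall>z\<in>cond_range X Y (ys ! i). g z = g x" if "i < length ys" for i
    using that
  proof (induction i)
    case 0
    then show ?case using ys(1,3) const in_range[of 0] by (metis hd_conv_nth)
  next
    case (Suc i)
    then obtain z where "z \<in> cond_range X Y (ys ! i)" "z \<in> cond_range X Y (ys ! Suc i)"
      using ys(5) by auto
    then show ?case using Suc const in_range[OF Suc.prems] by (metis Suc_lessD)
  qed
  show ?thesis
    using along_chain[of "length ys - 1"] ys(1,4) by (simp add: last_conv_nth)
qed

definition overlap_class :: "('w \<Rightarrow> 'x) \<Rightarrow> ('w \<Rightarrow> 'y) \<Rightarrow> 'x \<Rightarrow> 'x set" where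
  "overlap_class X Y x = {x' \<in> range X. overlap_connected X Y x x'}"

lemma overlap_partition_eq_image: "overlap_partition X Y = overlap_class X Y ` range X"
  unfolding overlap_partition_def overlap_class_def by auto

lemma finite_overlap_partition: "finite (range X) \<Longrightarrow> finite (overlap_partition X Y)"
  by (simp add: overlap_partition_eq_image)

lemma overlap_class_eq_if_cond_range:
  assumes "y \<in> range Y" "x1 \<in> cond_range X Y y" "x2 \<in> cond_range X Y y"
  shows "overlap_class X Y x1 = overlap_class X Y x2"
  unfolding overlap_class_def
  using overlap_connected_Cons[OF _ assms] overlap_connected_Cons[OF _ assms(1,3,2)] by blast

lemma card_image_le_card_overlap_partition:
  assumes fin: "finite (range X)"
    and const: "\<forall>y\<in>range Y. \<forall>a\<in>cond_range X Y y. \<forall>b\<in>cond_range X Y y. g a = g b"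
  shows "card (g ` range X) \<le> card (overlap_partition X Y)"
proof -
  let ?P = "overlap_partition X Y"
  have "range X = \<Union>?P"
    by (auto simp: overlap_partition_eq_image overlap_class_def overlap_connected_refl)
  then have "card (g ` range X) = card (\<Union>C\<in>?P. g ` C)"
    by (simp add: image_Union)
  also have "\<dots> \<le> (\<Sum>C\<in>?P. card (g ` C))"
    by (rule card_UN_le[OF finite_overlap_partition[OF fin]])
  also have "\<dots> \<le> (\<Sum>C\<in>?P. 1)"
  proof (rule sum_mono)
    fix C assume "C \<in> ?P"
    then obtain x where "C = overlap_class X Y x" by (auto simp: overlap_partition_eq_image)
    then have "g ` C \<subseteq> {g x}"
      using overlap_connected_imp_eq[OF _ const] by (auto simp: overlap_class_def)
    then show "card (g ` C) \<le> 1"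
      using card_mono[of "{g x}"] by fastforce
  qed
  finally show ?thesis by simp
qed

lemma bf_leakage_if_card_cond_range_eq_1:
  assumes "\<forall>y\<in>range Y. card (cond_range U Y y) = 1"
  shows "bf_leakage U Y = log 2 (card (range U))"
proof -
  have "(\<lambda>y. card (cond_range U Y y)) ` range Y = {1}"
    using assms by (auto simp: image_iff)
  then show ?thesis unfolding bf_leakage_def by simp
qed

lemma bf_leakage_le_log_card_range:
  assumes fin_U: "finite (range U)" and fin_Y: "finite (range Y)"
  shows "bf_leakage U Y \<le> log 2 (card (range U))"
proof -
  let ?M = "Min ((\<lambda>y. card (cond_range U Y y)) ` range Y)"
  have "?M \<in> (\<lambda>y. card (cond_range U Y y)) ` range Y"
    using fin_Y by (intro Min_in) auto
  then obtain y where y: "y \<in> range Y" and M: "?M = card (cond_range U Y y)" by auto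
  have "finite (cond_range U Y y)"
    using finite_subset[OF cond_range_subset_range fin_U] .
  then have "real ?M \<ge> 1"
    using M cond_range_nonempty[OF y, of U] by (simp add: Suc_leI card_gt_0_iff)
  moreover have "real (card (range U)) > 0"
    using fin_U by (simp add: card_gt_0_iff)
  ultimately show ?thesis
    unfolding bf_leakage_def by (simp add: divide_le_eq mult_le_cancel_left1)
qed

lemma bdd_above_bf_leakage_comp:
  assumes "finite (range X)" "finite (range Y)"
  shows "bdd_above {bf_leakage (g \<circ> X) Y | g :: 'x \<Rightarrow> 'u. True}"
proof (rule bdd_aboveI)
  fix v assume "v \<in> {bf_leakage (g \<circ> X) Y | g :: 'x \<Rightarrow> 'u. True}"
  then obtain g :: "'x \<Rightarrow> 'u" where v: "v = bf_leakage (g \<circ> X) Y" by blast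
  have range_comp: "range (g \<circ> X) = g ` range X" by auto
  have fin_gX: "finite (range (g \<circ> X))"
    unfolding range_comp using assms(1) by simp
  have "v \<le> log 2 (card (range (g \<circ> X)))"
    unfolding v using bf_leakage_le_log_card_range[OF fin_gX assms(2)] .
  also have "\<dots> \<le> log 2 (card (range X))"
  proof -
    have "card (range (g \<circ> X)) \<le> card (range X)"
      unfolding range_comp by (rule card_image_le[OF assms(1)])
    moreover have "card (range (g \<circ> X)) > 0"
      using fin_gX by (simp add: card_gt_0_iff)
    ultimately show ?thesis by simp
  qed
  finally show "v \<le> log 2 (card (range X))" .
qed

lemma bf_leakage_le_maximin_info:
  assumes "finite (range X)"
    and "\<forall>y\<in>range Y. card (cond_range (g \<circ> X) Y y) = 1"
  shows "bf_leakage (g \<circ> X) Y \<le> maximin_info X Y"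
proof -
  have "\<forall>y\<in>range Y. \<forall>a\<in>cond_range X Y y. \<forall>b\<in>cond_range X Y y. g a = g b"
    using assms(2) card_cond_range_comp_eq_1_iff[where g = g] by metis
  then have "card (g ` range X) \<le> card (overlap_partition X Y)"
    using assms(1) by (rule card_image_le_card_overlap_partition[rotated])
  moreover have "card (g ` range X) > 0"
    using assms(1) by (simp add: card_gt_0_iff)
  ultimately show ?thesis
    using bf_leakage_if_card_cond_range_eq_1[OF assms(2)]
    by (simp add: maximin_info_def image_comp)
qed

lemma bf_leakage_attains_maximin_info:
  assumes fin: "finite (range X)"
  obtains g :: "'x \<Rightarrow> nat"
  where "\<forall>y\<in>range Y. card (cond_range (g \<circ> X) Y y) = 1"
    and "bf_leakage (g \<circ> X) Y = maximin_info X Y"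
proof -
  obtain f :: "'x set \<Rightarrow> nat" where f: "inj_on f (overlap_partition X Y)"
    using finite_overlap_partition[OF fin] finite_imp_inj_to_nat_seg by blast
  define g where "g x = f (overlap_class X Y x)" for x
  have admissible: "\<forall>y\<in>range Y. card (cond_range (g \<circ> X) Y y) = 1"
  proof
    fix y assume y: "y \<in> range Y"
    show "card (cond_range (g \<circ> X) Y y) = 1"
      unfolding card_cond_range_comp_eq_1_iff[OF y] g_def
      using overlap_class_eq_if_cond_range[OF y] by metis
  qed
  have "g ` range X = f ` overlap_partition X Y"
    by (simp add: overlap_partition_eq_image g_def image_image)
  then have "card (range (g \<circ> X)) = card (overlap_partition X Y)"
    using card_image[OF f] by (simp add: image_comp)
  then have "bf_leakage (g \<circ> X) Y = maximin_info X Y"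
    by (simp add: bf_leakage_if_card_cond_range_eq_1[OF admissible] maximin_info_def)
  with admissible show thesis by (rule that)
qed

theorem proposition5:
  fixes X :: "'w \<Rightarrow> 'x" and Y :: "'w \<Rightarrow> 'y"
  assumes "finite (range X)" and "finite (range Y)"
  shows "maximin_info X Y =
           Sup {bf_leakage (g \<circ> X) Y | g :: 'x \<Rightarrow> nat.
                  \<forall>y \<in> range Y. card (cond_range (g \<circ> X) Y y) = 1}
       \<and> Sup {bf_leakage (g \<circ> X) Y | g :: 'x \<Rightarrow> nat.
                  \<forall>y \<in> range Y. card (cond_range (g \<circ> X) Y y) = 1}
           \<le> max_bf_leakage X Y"
proof -
  let ?S = "{bf_leakage (g \<circ> X) Y | g :: 'x \<Rightarrow> nat.
                  \<forall>y \<in> range Y. card (cond_range (g \<circ> X) Y y) = 1}"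
  obtain g0 :: "'x \<Rightarrow> nat" where "\<forall>y\<in>range Y. card (cond_range (g0 \<circ> X) Y y) = 1"
    and "bf_leakage (g0 \<circ> X) Y = maximin_info X Y"
    using bf_leakage_attains_maximin_info[OF assms(1)] .
  then have max_in: "maximin_info X Y \<in> ?S" by force
  have "Sup ?S = maximin_info X Y"
    using max_in bf_leakage_le_maximin_info[OF assms(1)] by (intro cSup_eq_maximum) auto
  moreover have "Sup ?S \<le> max_bf_leakage X Y"
    unfolding max_bf_leakage_def
    using max_in bdd_above_bf_leakage_comp[OF assms] by (intro cSup_subset_mono) auto
  ultimately show ?thesis by simp
qed

end
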